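(* Let $(Z,Z_{ac},h)$ be a normal accretive operator space and let $\nu$ be a matrix gauge on $Z$ which induces $(Z,Z_{ac},h)$. Then $\nu_n(z)\le\nu_{max}^n(z)$ for every $n$ and every $z\in M_n(Z)$, where $\nu_{max}^n(z)=\inf\{h_n(z+p):p\in Z_{ac}^n\}$.
   Context: For a complex vector space $Z$, $M_n(Z)$ is the $n\times n$ matrices over $Z$. A cone is a set $C$ with $C+C\subseteq C$, $tC\subseteq C$ for $t\ge0$; a matrix cone is a sequence of cones $C_n\subseteq M_n(Z)$ with $X^*C_nX\subseteq C_k$ for scalar $X\in M_{n,k}$; it is $\mathbb{C}$-proper if $C_1\cap-C_1\cap iC_1\cap-iC_1=\{0\}$, making $(Z,Z_{ac})$ an accretive matrix-ordered vector space. A matrix gauge is a sequence $\{\nu_n:M_n(Z)\to[0,\infty)\}$ with $\nu_n(x+y)\le\nu_n(x)+\nu_n(y)$, $\nu_n(tx)=t\nu_n(x)$ ($t\ge0$), $\nu_k(X^*AX)\le\|X\|^2\nu_n(A)$, $\nu_{n+m}(A\oplus B)=\max\{\nu_n(A),\nu_m(B)\}$; it is $\mathbb{C}$-proper if $\nu_1(i^kz)=0$ for $k=0,1,2,3$ implies $z=0$. A hermitian matrix gauge is a $\mathbb{C}$-proper matrix gauge with $h_n(tz)=|t|h_n(z)$ for real $t$. $Z_{ac}$ is $h$-closed if $z_k\in Z_{ac}^n$, $h_n(z_k-z)\to0$ imply $z\in Z_{ac}^n$. $(Z,Z_{ac},h)$ is a normal accretive operator space if $(Z,Z_{ac})$ is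 an accretive matrix-ordered vector space, $h$ is a hermitian matrix gauge, $Z_{ac}$ is $h$-closed, and $y-x,\ z-y\in Z_{ac}^n$ imply $h_n(y)\le\max\{h_n(x),h_n(z)\}$. A matrix gauge $\nu$ induces $(Z,Z_{ac},h)$ if $Z_{ac}^n=\{z:\nu_n(-z)=0\}$ and $h_n(z)=\max\{\nu_n(z),\nu_n(-z)\}$ for all $n,z$. *)

theory Defs
  imports "HOL-Analysis.Analysis" "HOL-Library.Function_Algebras"
begin

class scaleC =
  fixes scaleC :: "complex \<Rightarrow> 'a \<Rightarrow> 'a" (infixr \<open>*\<^sub>C\<close> 75)

class complex_vector = scaleC + ab_group_add +
  assumes scaleC_add_right: "a *\<^sub>C (x + y) = a *\<^sub>C x + a *\<^sub>C y"
    and scaleC_add_left: "(a + b) *\<^sub>C x = a *\<^sub>C x + b *\<^sub>C x"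
    and scaleC_scaleC: "a *\<^sub>C (b *\<^sub>C x) = (a * b) *\<^sub>C x"
    and scaleC_one: "1 *\<^sub>C x = x"

text \<open>Matrices over a complex vector space 'z are represented as functions
  nat => nat => 'z; M_n(Z) is the set of such functions vanishing outside
  the index square {0..<n} x {0..<n}. Sizes n range over n > 0.
  Scalar matrices X in M_{n,k}(C) are functions nat => nat => complex, of which
  only the entries X p i with p < n, i < k are used.\<close>

definition mats :: "nat \<Rightarrow> (nat \<Rightarrow> nat \<Rightarrow> 'z::complex_vector) set" where
  "mats n = {A. \<forall>i j. \<not> (i < n \<and> j < n) \<longrightarrow> A i j = 0}"

definition msc :: "complex \<Rightarrow> (nat \<Rightarrow> nat \<Rightarrow> 'z::complex_vector) \<Rightarrow> (nat \<Rightarrow> nat \<Rightarrow> 'z)" where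
  "msc c A = (\<lambda>i j. c *\<^sub>C A i j)"

text \<open>X^* A X for A in M_n(Z), X in M_{n,k}(C); result in M_k(Z).\<close>
definition mcongr :: "nat \<Rightarrow> nat \<Rightarrow> (nat \<Rightarrow> nat \<Rightarrow> complex) \<Rightarrow> (nat \<Rightarrow> nat \<Rightarrow> 'z::complex_vector)
    \<Rightarrow> (nat \<Rightarrow> nat \<Rightarrow> 'z)" where
  "mcongr n k X A = (\<lambda>i j. if i < k \<and> j < k
      then (\<Sum>p<n. \<Sum>q<n. (cnj (X p i) * X q j) *\<^sub>C A p q) else 0)"

definition cmat_norm :: "nat \<Rightarrow> nat \<Rightarrow> (nat \<Rightarrow> nat \<Rightarrow> complex) \<Rightarrow> real" where
  "cmat_norm n k X = Sup ((\<lambda>v. sqrt (\<Sum>i<n. (cmod (\<Sum>j<k. X i j * v j))\<^sup>2))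
      ` {v. (\<Sum>j<k. (cmod (v j))\<^sup>2) \<le> 1})"

definition dsum :: "nat \<Rightarrow> nat \<Rightarrow> (nat \<Rightarrow> nat \<Rightarrow> 'z::complex_vector) \<Rightarrow> (nat \<Rightarrow> nat \<Rightarrow> 'z)
    \<Rightarrow> (nat \<Rightarrow> nat \<Rightarrow> 'z)" where
  "dsum n m A B = (\<lambda>i j. if i < n \<and> j < n then A i j
      else if n \<le> i \<and> i < n + m \<and> n \<le> j \<and> j < n + m then B (i - n) (j - n) else 0)"

definition is_cone :: "nat \<Rightarrow> (nat \<Rightarrow> nat \<Rightarrow> 'z::complex_vector) set \<Rightarrow> bool" where
  "is_cone n C \<longleftrightarrow> C \<subseteq> mats n \<and> (\<forall>x\<in>C. \<forall>y\<in>C. x + y \<in> C)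
     \<and> (\<forall>t::real. t \<ge> 0 \<longrightarrow> (\<forall>x\<in>C. msc (of_real t) x \<in> C))"

definition matrix_cone :: "(nat \<Rightarrow> (nat \<Rightarrow> nat \<Rightarrow> 'z::complex_vector) set) \<Rightarrow> bool" where
  "matrix_cone C \<longleftrightarrow> (\<forall>n>0. is_cone n (C n))
     \<and> (\<forall>n k X. n > 0 \<longrightarrow> k > 0 \<longrightarrow> (\<forall>A\<in>C n. mcongr n k X A \<in> C k))"

definition C_proper_cone :: "(nat \<Rightarrow> (nat \<Rightarrow> nat \<Rightarrow> 'z::complex_vector) set) \<Rightarrow> bool" where
  "C_proper_cone C \<longleftrightarrow>
     C 1 \<inter> uminus ` C 1 \<inter> msc \<i> ` C 1 \<inter> msc (- \<i>) ` C 1 = {0}"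

definition accretive_mos :: "(nat \<Rightarrow> (nat \<Rightarrow> nat \<Rightarrow> 'z::complex_vector) set) \<Rightarrow> bool" where
  "accretive_mos C \<longleftrightarrow> matrix_cone C \<and> C_proper_cone C"

definition matrix_gauge :: "(nat \<Rightarrow> (nat \<Rightarrow> nat \<Rightarrow> 'z::complex_vector) \<Rightarrow> real) \<Rightarrow> bool" where
  "matrix_gauge \<nu> \<longleftrightarrow>
     (\<forall>n>0. \<forall>x\<in>mats n. \<nu> n x \<ge> 0)
   \<and> (\<forall>n>0. \<forall>x\<in>mats n. \<forall>y\<in>mats n. \<nu> n (x + y) \<le> \<nu> n x + \<nu> n y)
   \<and> (\<forall>n>0. \<forall>x\<in>mats n. \<forall>t::real. t \<ge> 0 \<longrightarrow> \<nu> n (msc (of_real t) x) = t * \<nu> n x)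
   \<and> (\<forall>n k X. n > 0 \<longrightarrow> k > 0 \<longrightarrow> (\<forall>A\<in>mats n.
         \<nu> k (mcongr n k X A) \<le> (cmat_norm n k X)\<^sup>2 * \<nu> n A))
   \<and> (\<forall>n m. n > 0 \<longrightarrow> m > 0 \<longrightarrow> (\<forall>A\<in>mats n. \<forall>B\<in>mats m.
         \<nu> (n + m) (dsum n m A B) = max (\<nu> n A) (\<nu> m B)))"

definition C_proper_gauge :: "(nat \<Rightarrow> (nat \<Rightarrow> nat \<Rightarrow> 'z::complex_vector) \<Rightarrow> real) \<Rightarrow> bool" where
  "C_proper_gauge \<nu> \<longleftrightarrow>
     (\<forall>z\<in>mats 1. (\<forall>k::nat<4. \<nu> 1 (msc (\<i> ^ k) z) = 0) \<longrightarrow> z = 0)"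

definition hermitian_gauge :: "(nat \<Rightarrow> (nat \<Rightarrow> nat \<Rightarrow> 'z::complex_vector) \<Rightarrow> real) \<Rightarrow> bool" where
  "hermitian_gauge h \<longleftrightarrow> matrix_gauge h \<and> C_proper_gauge h
     \<and> (\<forall>n>0. \<forall>x\<in>mats n. \<forall>t::real. h n (msc (of_real t) x) = \<bar>t\<bar> * h n x)"

definition h_closed :: "(nat \<Rightarrow> (nat \<Rightarrow> nat \<Rightarrow> 'z::complex_vector) set)
    \<Rightarrow> (nat \<Rightarrow> (nat \<Rightarrow> nat \<Rightarrow> 'z) \<Rightarrow> real) \<Rightarrow> bool" where
  "h_closed C h \<longleftrightarrow> (\<forall>n>0. \<forall>zs z. (\<forall>k. zs k \<in> C n) \<longrightarrow> z \<in> mats n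
      \<longrightarrow> (\<lambda>k. h n (zs k - z)) \<longlonglongrightarrow> 0 \<longrightarrow> z \<in> C n)"

definition normal_aos :: "(nat \<Rightarrow> (nat \<Rightarrow> nat \<Rightarrow> 'z::complex_vector) set)
    \<Rightarrow> (nat \<Rightarrow> (nat \<Rightarrow> nat \<Rightarrow> 'z) \<Rightarrow> real) \<Rightarrow> bool" where
  "normal_aos C h \<longleftrightarrow> accretive_mos C \<and> hermitian_gauge h \<and> h_closed C h
     \<and> (\<forall>n>0. \<forall>x\<in>mats n. \<forall>y\<in>mats n. \<forall>z\<in>mats n.
           y - x \<in> C n \<longrightarrow> z - y \<in> C n \<longrightarrow> h n y \<le> max (h n x) (h n z))"

definition induces :: "(nat \<Rightarrow> (nat \<Rightarrow> nat \<Rightarrow> 'z::complex_vector) \<Rightarrow> real)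
    \<Rightarrow> (nat \<Rightarrow> (nat \<Rightarrow> nat \<Rightarrow> 'z) set) \<Rightarrow> (nat \<Rightarrow> (nat \<Rightarrow> nat \<Rightarrow> 'z) \<Rightarrow> real) \<Rightarrow> bool" where
  "induces \<nu> C h \<longleftrightarrow> (\<forall>n>0. C n = {z \<in> mats n. \<nu> n (- z) = 0}
      \<and> (\<forall>z\<in>mats n. h n z = max (\<nu> n z) (\<nu> n (- z))))"

definition nu_max :: "(nat \<Rightarrow> (nat \<Rightarrow> nat \<Rightarrow> 'z::complex_vector) set)
    \<Rightarrow> (nat \<Rightarrow> (nat \<Rightarrow> nat \<Rightarrow> 'z) \<Rightarrow> real) \<Rightarrow> nat \<Rightarrow> (nat \<Rightarrow> nat \<Rightarrow> 'z) \<Rightarrow> real" where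
  "nu_max C h n z = Inf {h n (z + p) | p. p \<in> C n}"

end

theory Submission
  imports Defs
begin

text \<open>Subadditivity gives \<open>\<nu>(z) \<le> \<nu>(z + p) + \<nu>(-p) = \<nu>(z + p) \<le> h(z + p)\<close> for every
  accretive \<open>p\<close>, and \<open>p = 0\<close> shows that the infimum defining \<open>\<nu>\<^sub>m\<^sub>a\<^sub>x\<close> ranges over a
  nonempty set.\<close>

lemma scaleC_zero_right [simp]: "a *\<^sub>C (0::'z::complex_vector) = 0"
proof -
  have "a *\<^sub>C (0::'z) = a *\<^sub>C 0 + a *\<^sub>C 0"
    by (metis add.right_neutral scaleC_add_right)
  then show ?thesis by simp
qed

lemma mats_zero: "0 \<in> mats n"
  by (simp add: mats_def)

lemma mats_add: "x \<in> mats n \<Longrightarrow> y \<in> mats n \<Longrightarrow> x + y \<in> mats n"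
  by (simp add: mats_def)

lemma mats_uminus: "x \<in> mats n \<Longrightarrow> - x \<in> mats n"
  by (simp add: mats_def)

lemma matrix_gauge_add:
  assumes "matrix_gauge \<nu>" and "n > 0" and "x \<in> mats n" and "y \<in> mats n"
  shows "\<nu> n (x + y) \<le> \<nu> n x + \<nu> n y"
  using assms unfolding matrix_gauge_def by simp

lemma matrix_gauge_scale:
  assumes "matrix_gauge \<nu>" and "n > 0" and "x \<in> mats n" and "t \<ge> 0"
  shows "\<nu> n (msc (of_real t) x) = t * \<nu> n x"
  using assms unfolding matrix_gauge_def by simp

lemma matrix_gauge_zero:
  assumes "matrix_gauge \<nu>" and "n > 0"
  shows "\<nu> n 0 = 0"
proof -
  have "msc (of_real 0) (0 :: nat \<Rightarrow> nat \<Rightarrow> 'z::complex_vector) = 0"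
    by (simp add: msc_def fun_eq_iff)
  then show ?thesis
    using matrix_gauge_scale[OF assms mats_zero, of 0] by (metis mult_zero_left order_refl)
qed

lemma matrix_gauge_le_add_null:
  assumes "matrix_gauge \<nu>" and "n > 0"
    and "z \<in> mats n" and "p \<in> mats n" and "\<nu> n (- p) = 0"
  shows "\<nu> n z \<le> \<nu> n (z + p)"
proof -
  have "\<nu> n z = \<nu> n ((z + p) + - p)"
    by simp
  also have "\<dots> \<le> \<nu> n (z + p) + \<nu> n (- p)"
    using matrix_gauge_add assms(1,2) mats_add[OF assms(3,4)] mats_uminus[OF assms(4)] .
  finally show ?thesis
    using assms(5) by simp
qed

lemma induces_zero_mem:
  assumes "matrix_gauge \<nu>" and "induces \<nu> C h" and "n > 0"
  shows "0 \<in> C n"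
  using assms(2,3) matrix_gauge_zero[OF assms(1,3)] mats_zero unfolding induces_def by simp

lemma induces_gauge_le_hermitian_add:
  assumes "matrix_gauge \<nu>" and "induces \<nu> C h" and "n > 0"
    and "z \<in> mats n" and "p \<in> C n"
  shows "\<nu> n z \<le> h n (z + p)"
proof -
  have p: "p \<in> mats n" "\<nu> n (- p) = 0"
    using assms(2,3,5) unfolding induces_def by auto
  have "\<nu> n z \<le> \<nu> n (z + p)"
    using matrix_gauge_le_add_null[OF assms(1,3,4) p] .
  also have "\<dots> \<le> h n (z + p)"
    using assms(2,3) mats_add[OF assms(4) p(1)] unfolding induces_def by simp
  finally show ?thesis .
qed

theorem proposition5p9:
  fixes Zac :: "nat \<Rightarrow> (nat \<Rightarrow> nat \<Rightarrow> 'z::complex_vector) set"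
    and h \<nu> :: "nat \<Rightarrow> (nat \<Rightarrow> nat \<Rightarrow> 'z) \<Rightarrow> real"
  assumes "normal_aos Zac h"
    and "matrix_gauge \<nu>"
    and "induces \<nu> Zac h"
  shows "\<forall>n>0. \<forall>z\<in>mats n. \<nu> n z \<le> nu_max Zac h n z"
proof (intro allI impI ballI)
  fix n and z :: "nat \<Rightarrow> nat \<Rightarrow> 'z"
  assume "n > 0" and "z \<in> mats n"
  have "{h n (z + p) | p. p \<in> Zac n} \<noteq> {}"
    using induces_zero_mem[OF assms(2,3) \<open>n > 0\<close>] by blast
  moreover have "\<And>x. x \<in> {h n (z + p) | p. p \<in> Zac n} \<Longrightarrow> \<nu> n z \<le> x"
    using induces_gauge_le_hermitian_add[OF assms(2,3) \<open>n > 0\<close> \<open>z \<in> mats n\<close>] by blast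
  ultimately show "\<nu> n z \<le> nu_max Zac h n z"
    unfolding nu_max_def by (rule cInf_greatest)
qed

end
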